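(* Let $q\geq 23$. If $(x_0,x_1,x_2)$ is a state of nonnegative integers with $wt_q(x_0,x_1,x_2)=2^q$ and $x_2\geq q^2$, then Paul has a strategy (a choice of legal questions depending on Carole's previous answers) such that, whatever Carole answers, after exactly $q$ rounds the state $\vec{z}$ satisfies $wt_0(\vec{z})=1$, and every intermediate state $(u_0,u_1,u_2)$ reached after playing $q-j$ rounds satisfies $wt_j(u_0,u_1,u_2)=2^j$.
   Context: Liar game with $2$ lies: a state is $\vec{x}=(x_0,x_1,x_2)$ of nonnegative integers; in each round Paul chooses a legal question $\vec{a}=(a_0,a_1,a_2)$ with integers $0\leq a_i\leq x_i$, and Carole answers Y or N; the next state is $(a_0,\,a_1+x_0-a_0,\,a_2+x_1-a_1)$ after Y, or $(x_0-a_0,\,x_1-a_1+a_0,\,x_2-a_2+a_1)$ after N. Weight: $wt_j(x_0,x_1,x_2)=x_0\binom{j}{\leq 2}+x_1\binom{j}{\leq 1}+x_2$, with $\binom{j}{\leq m}=\sum_{i=0}^m\binom{j}{i}$ (so $wt_0(\vec{z})=z_0+z_1+z_2$). *)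

theory Defs
  imports Main
begin

type_synonym state = "nat \<times> nat \<times> nat"
type_synonym question = "nat \<times> nat \<times> nat"

definition binom_le :: "nat \<Rightarrow> nat \<Rightarrow> nat" where
  "binom_le j m = (\<Sum>i=0..m. j choose i)"

definition wt :: "nat \<Rightarrow> state \<Rightarrow> nat" where
  "wt j x = (case x of (x0, x1, x2) \<Rightarrow> x0 * binom_le j 2 + x1 * binom_le j 1 + x2)"

definition legal :: "state \<Rightarrow> question \<Rightarrow> bool" where
  "legal x a = (case x of (x0, x1, x2) \<Rightarrow> case a of (a0, a1, a2) \<Rightarrow>
      a0 \<le> x0 \<and> a1 \<le> x1 \<and> a2 \<le> x2)"

text \<open>Next state: True = answer Y, False = answer N.\<close>
definition next_state :: "state \<Rightarrow> question \<Rightarrow> bool \<Rightarrow> state" where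
  "next_state x a b = (case x of (x0, x1, x2) \<Rightarrow> case a of (a0, a1, a2) \<Rightarrow>
      if b then (a0, a1 + x0 - a0, a2 + x1 - a1)
      else (x0 - a0, x1 - a1 + a0, x2 - a2 + a1))"

text \<open>A strategy maps the history of Carole's previous answers to Paul's next question.
  run s x h bs: state reached from x when history h is already played and answers bs follow.\<close>
fun run :: "(bool list \<Rightarrow> question) \<Rightarrow> state \<Rightarrow> bool list \<Rightarrow> bool list \<Rightarrow> state" where
  "run s x h [] = x"
| "run s x h (b # bs) = run s (next_state x (s h) b) (h @ [b]) bs"

end

theory Submission
  imports Defs
begin

text \<open>
  For every legal question, wt (Suc n) x = wt n Y + wt n N, where Y and N are the states after
  the two answers. So Paul wins if in every round, with weight 2^(n+1), he can ask a question
  that splits it as 2^n + 2^n. Both answers receive x0 (n + 1) + x1 of the weight whatever the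
  question, so he must halve exactly the excess x0 C(n,2) + x1 n + x2: split x0 and x1 as evenly
  as possible and repair the parity defects inside x1 and x2, which works once x2 is large.

  With j rounds left Paul keeps the invariant binom_le q 2 (x0 - 1) < 2^j and x2 \<ge> (about) j.
  The first part survives halving x0. For j > 8 it forces almost all of the weight onto x1
  and x2, which keeps x2 large in both answers. For j \<le> 8 it forces x0 \<le> 1 and a finite
  check suffices. At the root the hypothesis x2 \<ge> q^2 takes over.
\<close>

lemma binom_le_1: "binom_le n 1 = n + 1"
  unfolding binom_le_def by simp

lemma binom_le_2: "binom_le n 2 = (n choose 2) + n + 1"
  unfolding binom_le_def by (simp add: numeral_2_eq_2)

lemma Suc_choose_two: "(Suc n choose 2) = (n choose 2) + n"
  by (simp add: numeral_2_eq_2)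

lemma two_choose_two: "2 * (n choose 2) + n = n * n"
  unfolding choose_two by (cases n) auto

lemma two_binom_le_2: "2 * binom_le n 2 = n * n + n + 2"
  using two_choose_two[of n] unfolding binom_le_2 by simp

lemma binom_le_Suc_2: "binom_le (Suc n) 2 = binom_le n 2 + Suc n"
  unfolding binom_le_2 Suc_choose_two by simp

lemma binom_le_mono: "m \<le> n \<Longrightarrow> binom_le m k \<le> binom_le n k"
  unfolding binom_le_def by (intro sum_mono binomial_right_mono)

lemma wt_eq: "wt n (x0, x1, x2) = x0 * ((n choose 2) + n + 1) + x1 * (n + 1) + x2"
  unfolding wt_def binom_le_1 binom_le_2 by simp

definition excess :: "nat \<Rightarrow> question \<Rightarrow> nat" where
  "excess n a = (case a of (a0, a1, a2) \<Rightarrow> a0 * (n choose 2) + a1 * n + a2)"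

lemma wt_Suc: "wt (Suc n) (x0, x1, x2) = 2 * (x0 * (n + 1) + x1) + excess n (x0, x1, x2)"
  by (simp add: wt_eq excess_def Suc_choose_two algebra_simps)

lemma wt_next_state_True:
  assumes "legal (x0, x1, x2) (a0, a1, a2)"
  shows "wt n (next_state (x0, x1, x2) (a0, a1, a2) True) = x0 * (n + 1) + x1 + excess n (a0, a1, a2)"
proof -
  obtain u0 u1 where "x0 = a0 + u0" "x1 = a1 + u1"
    using assms unfolding legal_def by (auto dest!: le_Suc_ex)
  then show ?thesis by (simp add: next_state_def wt_eq excess_def algebra_simps)
qed

lemma wt_next_state_conservation:
  assumes "legal x a"
  shows "wt n (next_state x a True) + wt n (next_state x a False) = wt (Suc n) x"
proof -
  obtain x0 x1 x2 a0 a1 a2 where x: "x = (x0, x1, x2)" and a: "a = (a0, a1, a2)"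
    by (cases x, cases a)
  obtain u0 u1 u2 where "x0 = a0 + u0" "x1 = a1 + u1" "x2 = a2 + u2"
    using assms unfolding x a legal_def by (auto dest!: le_Suc_ex)
  then show ?thesis
    unfolding x a by (simp add: next_state_def wt_eq Suc_choose_two algebra_simps)
qed

lemma wt_next_state_half:
  assumes "legal x a" "2 * excess n a = excess n x"
  shows "2 * wt n (next_state x a b) = wt (Suc n) x"
proof -
  obtain x0 x1 x2 a0 a1 a2 where x: "x = (x0, x1, x2)" and a: "a = (a0, a1, a2)"
    by (cases x, cases a)
  have "2 * wt n (next_state x a True) = wt (Suc n) x"
    using assms unfolding x a by (simp add: wt_next_state_True wt_Suc)
  then show ?thesis
    using wt_next_state_conservation[OF assms(1), of n] by (cases b) simp_all
qed

lemma run_Cons_history: "run s x (b # h) bs = run (\<lambda>h'. s (b # h')) x h bs"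
  by (induction bs arbitrary: x h) simp_all

lemma strategy_from_invariant:
  fixes P :: "nat \<Rightarrow> state \<Rightarrow> bool"
  assumes "\<And>m y. m < n \<Longrightarrow> P (Suc m) y \<Longrightarrow> \<exists>a. legal y a \<and> (\<forall>b. P m (next_state y a b))"
    and "P n x"
  shows "\<exists>s. \<forall>h. length h \<le> n \<longrightarrow>
           P (n - length h) (run s x [] h) \<and> (length h < n \<longrightarrow> legal (run s x [] h) (s h))"
  using assms
proof (induction n arbitrary: x)
  case 0
  then show ?case by auto
next
  case (Suc n)
  obtain a where a: "legal x a" "\<And>b. P n (next_state x a b)"
    using Suc.prems by blast
  have "\<forall>b. \<exists>s. \<forall>h. length h \<le> n \<longrightarrow> P (n - length h) (run s (next_state x a b) [] h) \<and>
           (length h < n \<longrightarrow> legal (run s (next_state x a b) [] h) (s h))"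
    using Suc.IH Suc.prems(1) a(2) by simp
  then obtain sub where sub: "\<And>b h. length h \<le> n \<Longrightarrow>
      P (n - length h) (run (sub b) (next_state x a b) [] h) \<and>
      (length h < n \<longrightarrow> legal (run (sub b) (next_state x a b) [] h) (sub b h))"
    by metis
  define s where "s h = (case h of [] \<Rightarrow> a | b # h' \<Rightarrow> sub b h')" for h
  have "P (Suc n - length h) (run s x [] h) \<and> (length h < Suc n \<longrightarrow> legal (run s x [] h) (s h))"
    if "length h \<le> Suc n" for h
  proof (cases h)
    case Nil
    then show ?thesis using Suc.prems(2) a(1) by (simp add: s_def)
  next
    case (Cons b h')
    have "run s x [] h = run (sub b) (next_state x a b) [] h'"
      using run_Cons_history[of s _ b "[]" h'] by (simp add: Cons s_def)
    then show ?thesis using sub[of h' b] that by (simp add: Cons s_def)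
  qed
  then show ?case by blast
qed

definition good_question :: "nat \<Rightarrow> nat \<Rightarrow> state \<Rightarrow> question \<Rightarrow> bool" where
  "good_question n h x a \<longleftrightarrow> legal x a \<and> 2 * excess n a = excess n x \<and>
     (\<forall>b. case next_state x a b of (y0, y1, y2) \<Rightarrow> 2 * y0 \<le> fst x + 1 \<and> h \<le> y2)"

lemma good_questionI:
  assumes "a0 \<le> x0" "a1 \<le> x1" "a2 \<le> x2"
    and "2 * excess n (a0, a1, a2) = excess n (x0, x1, x2)"
    and "2 * a0 \<le> x0 + 1" "2 * (x0 - a0) \<le> x0 + 1"
    and "h \<le> a2 + x1 - a1" "h \<le> x2 - a2 + a1"
  shows "good_question n h (x0, x1, x2) (a0, a1, a2)"
  using assms unfolding good_question_def legal_def next_state_def by (auto split: bool.split)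

lemma good_question_even_even:
  assumes "even x0" "even x1" "even (excess n (x0, x1, x2))" "2 * h \<le> x1 + x2"
  shows "\<exists>a. good_question n h (x0, x1, x2) a"
proof -
  obtain b0 b1 where b: "x0 = 2 * b0" "x1 = 2 * b1"
    using assms(1,2) by (meson evenE)
  moreover have "even x2"
    using assms(3) b by (simp add: excess_def)
  then obtain b2 where "x2 = 2 * b2" ..
  ultimately have "good_question n h (x0, x1, x2) (b0, b1, b2)"
    using assms(4) by (intro good_questionI) (auto simp: excess_def algebra_simps)
  then show ?thesis by blast
qed

lemma good_question_even_odd:
  assumes "even x0" "odd x1" "even (excess n (x0, x1, x2))"
    and "n \<le> x2" "2 * h + n + 1 \<le> x1 + x2"
  shows "\<exists>a. good_question n h (x0, x1, x2) a"
proof -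
  obtain b0 b1 where b: "x0 = 2 * b0" "x1 = 2 * b1 + 1"
    using assms(1,2) by (meson evenE oddE)
  moreover have "even (x2 + n)"
    using assms(3) b by (simp add: excess_def algebra_simps)
  then obtain b2 where "x2 + n = 2 * b2" ..
  ultimately have "good_question n h (x0, x1, x2) (b0, b1, b2)"
    using assms(4,5) by (intro good_questionI) (auto simp: excess_def algebra_simps)
  then show ?thesis by blast
qed

lemma good_question_odd_large_x1:
  assumes "odd x0" "even (excess n (x0, x1, x2))"
    and "n + 1 \<le> 2 * x1" "n \<le> x2" "4 * h + 3 * n + 1 \<le> 2 * x1 + 2 * x2"
  shows "\<exists>a. good_question n h (x0, x1, x2) a"
proof -
  define c where "c = n choose 2"
  have c: "2 * c + n = n * n"
    unfolding c_def by (rule two_choose_two)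
  obtain b0 where b0: "x0 = 2 * b0 + 1"
    using assms(1) by (meson oddE)
  \<comment> \<open>With this k the x2-parts t + x1 - k and x2 - t + k of the two answers differ by at
    most 3 (n + 1) / 2.\<close>
  define k r where "k = (2 * x1 + 2 - n) div 4" and "r = (2 * x1 + 2 - n) mod 4"
  have kr: "2 * x1 + 2 = n + 4 * k + r"
    using assms(3) div_mult_mod_eq[of "2 * x1 + 2 - n" 4] unfolding k_def r_def by linarith
  have "r < 4"
    unfolding r_def by simp
  have "n * r \<le> 3 * n"
    using \<open>r < 4\<close> by simp
  moreover have "2 * (n * x1) + 2 * n = n * n + 4 * (n * k) + n * r"
    using arg_cong[where f = "(*) n", OF kr] by (simp add: algebra_simps)
  ultimately have lower: "2 * c + 4 * (n * k) \<le> 2 * (n * x1) + n"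
    and upper: "2 * (n * x1) \<le> 2 * c + 4 * (n * k) + 2 * n"
    using c by linarith+
  have "n * x1 + x2 - (c + 2 * (n * k)) = excess n (x0, x1, x2) - 2 * ((b0 + 1) * c + n * k)"
    using lower assms(4) unfolding excess_def b0 c_def by (simp add: algebra_simps)
  with assms(2) have "even (n * x1 + x2 - (c + 2 * (n * k)))"
    by (simp only: dvd_diff_nat dvd_triv_left)
  then obtain t where "n * x1 + x2 - (c + 2 * (n * k)) = 2 * t" ..
  with lower assms(4) have t: "n * x1 + x2 = c + 2 * (n * k) + 2 * t"
    by linarith
  have "4 * h + 2 \<le> 2 * x1 + 2 * x2"
    using assms(5) by presburger
  have "good_question n h (x0, x1, x2) (b0 + 1, k, t)"
  proof (rule good_questionI)
    show "k \<le> x1"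
      using kr assms(3) by linarith
    show "t \<le> x2"
      using t upper assms(4) by linarith
    show "2 * excess n (b0 + 1, k, t) = excess n (x0, x1, x2)"
      using t unfolding excess_def b0 c_def[symmetric] by (simp add: algebra_simps)
    show "b0 + 1 \<le> x0" "2 * (b0 + 1) \<le> x0 + 1" "2 * (x0 - (b0 + 1)) \<le> x0 + 1"
      using b0 by simp_all
    show "h \<le> t + x1 - k"
      using kr t lower assms(3) \<open>4 * h + 2 \<le> _\<close> by linarith
    show "h \<le> x2 - t + k"
      using kr \<open>r < 4\<close> t upper assms(4,5) by linarith
  qed
  then show ?thesis by blast
qed

lemma good_question_odd_small_x1:
  assumes "odd x0" "even (excess n (x0, x1, x2))"
    and "n choose 2 \<le> x2 + n * x1" "n * x1 \<le> (n choose 2) + x2"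
    and "(n choose 2) + 2 * h \<le> x2 + 2 * x1 + n * x1" "2 * h + n * x1 \<le> x2 + (n choose 2)"
  shows "\<exists>a. good_question n h (x0, x1, x2) a"
proof -
  obtain b0 where b0: "x0 = 2 * b0 + 1"
    using assms(1) by (meson oddE)
  have "x2 + n * x1 - (n choose 2) = excess n (x0, x1, x2) - 2 * ((b0 + 1) * (n choose 2))"
    using assms(3) unfolding excess_def b0 by (simp add: algebra_simps)
  with assms(2) have "even (x2 + n * x1 - (n choose 2))"
    by (simp only: dvd_diff_nat dvd_triv_left)
  then obtain b2 where "x2 + n * x1 - (n choose 2) = 2 * b2" ..
  with b0 assms(3-6) have "good_question n h (x0, x1, x2) (b0 + 1, 0, b2)"
    by (intro good_questionI) (auto simp: excess_def algebra_simps)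
  then show ?thesis by blast
qed

definition splittable :: "nat \<Rightarrow> nat \<Rightarrow> state \<Rightarrow> bool" where
  "splittable n h x \<longleftrightarrow> (case x of (x0, x1, x2) \<Rightarrow>
     if even x0 then
       if even x1 then 2 * h \<le> x1 + x2 else n \<le> x2 \<and> 2 * h + n + 1 \<le> x1 + x2
     else if n + 1 \<le> 2 * x1 then n \<le> x2 \<and> 4 * h + 3 * n + 1 \<le> 2 * x1 + 2 * x2
     else n choose 2 \<le> x2 + n * x1 \<and> n * x1 \<le> (n choose 2) + x2 \<and>
       (n choose 2) + 2 * h \<le> x2 + 2 * x1 + n * x1 \<and> 2 * h + n * x1 \<le> x2 + (n choose 2))"

lemma good_question_if_splittable:
  assumes "splittable n h x" "even (excess n x)"
  shows "\<exists>a. good_question n h x a"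
proof -
  obtain x0 x1 x2 where x: "x = (x0, x1, x2)"
    by (cases x)
  show ?thesis
    using assms good_question_even_even[of x0 x1 n x2 h] good_question_even_odd[of x0 x1 n x2 h]
      good_question_odd_large_x1[of x0 n x1 x2 h] good_question_odd_small_x1[of x0 n x1 x2 h]
    unfolding x splittable_def by (auto split: if_splits)
qed

text \<open>Below level 8 the invariant forces x0 \<le> 1; there the thresholds are chosen so that the
  finite check in splittable_low_level goes through.\<close>

definition x2_bound :: "nat \<Rightarrow> nat" where
  "x2_bound j = (if j < 8 then [0, 0, 0, 0, 2, 5, 8, 12] ! j else j)"

lemma splittable_low_level:
  assumes "n \<le> 7" "277 \<le> Q" "Q * (x0 - 1) < 2 ^ Suc n"
    and "wt (Suc n) (x0, x1, x2) = 2 ^ Suc n" "x2_bound (Suc n) \<le> x2"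
  shows "splittable n (x2_bound n) (x0, x1, x2)"
proof -
  have "(2::nat) ^ Suc n \<le> 256"
    using power_increasing[of "Suc n" 8 "2::nat"] assms(1) by simp
  with assms(2,3) have "Q * (x0 - 1) < Q * 1"
    by linarith
  then have "x0 = 0 \<or> x0 = 1"
    by (simp only: mult_less_cancel1) auto
  moreover have "n = 0 \<or> n = 1 \<or> n = 2 \<or> n = 3 \<or> n = 4 \<or> n = 5 \<or> n = 6 \<or> n = 7"
    using assms(1) by linarith
  ultimately show ?thesis
    using assms(4,5) unfolding splittable_def x2_bound_def wt_eq choose_two
    by (elim disjE) (simp_all, presburger+)
qed

lemma splittable_high_level:
  assumes "1 \<le> n" "4 * n \<le> x1 + x2" "n + 1 \<le> x2" "2 * x1 \<le> n \<Longrightarrow> (n + 1)\<^sup>2 \<le> x2"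
  shows "splittable n n (x0, x1, x2)"
proof (cases "n + 1 \<le> 2 * x1")
  case True
  then show ?thesis
    using assms(1-3) unfolding splittable_def by auto
next
  case False
  then have "2 * (n * x1) \<le> n * n"
    using mult_le_mono2[of "2 * x1" n n] by (simp add: algebra_simps)
  moreover have "n * n + 2 * n + 1 \<le> x2"
    using False assms(4) by (simp add: power2_eq_square algebra_simps)
  ultimately have "n choose 2 \<le> x2 + n * x1 \<and> n * x1 \<le> (n choose 2) + x2 \<and>
      (n choose 2) + 2 * n \<le> x2 + 2 * x1 + n * x1 \<and> 2 * n + n * x1 \<le> x2 + (n choose 2)"
    using two_choose_two[of n] by (intro conjI) linarith+
  then show ?thesis
    using False assms(1-3) unfolding splittable_def by auto
qed

lemma splittable_root_level:
  assumes "2 \<le> n" "(n + 1)\<^sup>2 \<le> x2"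
  shows "splittable n n (x0, x1, x2)"
proof (rule splittable_high_level)
  have "2 * n \<le> n * n"
    using assms(1) by (rule mult_le_mono1)
  moreover have "(n + 1)\<^sup>2 = n * n + 2 * n + 1"
    by (simp add: power2_eq_square)
  ultimately show "4 * n \<le> x1 + x2" "n + 1 \<le> x2"
    using assms(2) by linarith+
qed (use assms in simp_all)

lemma splittable_mid_level:
  assumes "1 \<le> n" "4 * n * (n + 2) \<le> x1 * (n + 2) + x2" "n + 1 \<le> x2"
  shows "splittable n n (x0, x1, x2)"
proof (rule splittable_high_level)
  have "(n + 2) * (4 * n) \<le> (n + 2) * (x1 + x2)"
    using assms(2) by (simp add: algebra_simps)
  then show "4 * n \<le> x1 + x2"
    by (simp only: mult_le_cancel1)
  assume "2 * x1 \<le> n"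
  then have "2 * (x1 * (n + 2)) \<le> n * (n + 2)"
    using mult_le_mono1[of "2 * x1" n "n + 2"] by (simp add: algebra_simps)
  with assms(1,2) show "(n + 1)\<^sup>2 \<le> x2"
    unfolding power2_eq_square by (simp add: algebra_simps)
qed (use assms in simp_all)

lemma cube_le_two_power: "12 \<le> n \<Longrightarrow> 3 * (n + 1) ^ 3 \<le> (2::nat) ^ (n + 1)"
proof (induction n rule: dec_induct)
  case base
  then show ?case by simp
next
  case (step m)
  obtain t where "m = t + 12"
    using step(1) le_Suc_ex by (metis add.commute)
  then have "3 * (Suc m + 1) ^ 3 \<le> 2 * (3 * (m + 1) ^ 3)"
    by (simp add: power3_eq_cube algebra_simps)
  also have "\<dots> \<le> 2 ^ (Suc m + 1)"
    using step(3) by simp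
  finally show ?case .
qed

lemma binom_le_growth:
  assumes "12 \<le> n"
  shows "binom_le (n + 2) 2 * (binom_le (n + 1) 2 + 4 * n * (n + 2)) \<le> (n + 2) * 2 ^ (n + 1)"
proof -
  obtain t where t: "n = t + 12"
    using assms le_Suc_ex by (metis add.commute)
  have "4 * (binom_le (n + 2) 2 * (binom_le (n + 1) 2 + 4 * n * (n + 2)))
      = (2 * binom_le (n + 2) 2) * (2 * binom_le (n + 1) 2 + 8 * n * (n + 2))"
    by simp
  also have "\<dots> \<le> 4 * (n + 2) * (3 * (n + 1) ^ 3)"
    unfolding two_binom_le_2 t by (simp add: power3_eq_cube algebra_simps)
  also have "\<dots> \<le> 4 * (n + 2) * 2 ^ (n + 1)"
    using cube_le_two_power[OF assms] by simp
  finally show ?thesis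
    by (simp only: mult.assoc mult_le_cancel1)
qed

lemma x0_weight_bound:
  assumes "8 \<le> n" "277 \<le> Q" "binom_le (n + 2) 2 \<le> Q" "Q * (x0 - 1) < 2 ^ (n + 1)"
  shows "x0 * binom_le (n + 1) 2 + 4 * n * (n + 2) \<le> 2 ^ (n + 1)"
proof -
  define P C E where "P = (2::nat) ^ (n + 1)" and "C = binom_le (n + 1) 2"
    and "E = binom_le (n + 1) 2 + 4 * n * (n + 2)"
  have key: "P * C + Q * E \<le> Q * P"
  proof (cases "n \<le> 11")
    case True
    then have "n = 8 \<or> n = 9 \<or> n = 10 \<or> n = 11"
      using assms(1) by linarith
    then show ?thesis
      using assms(2) unfolding P_def C_def E_def binom_le_2 choose_two by auto
  next
    case False
    have B: "binom_le (n + 2) 2 = C + (n + 2)"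
      unfolding C_def using binom_le_Suc_2[of "n + 1"] by simp
    have growth: "(C + (n + 2)) * E \<le> (n + 2) * P"
      using binom_le_growth[of n] False unfolding B P_def E_def C_def by simp
    have "(n + 2) * E \<le> (C + (n + 2)) * E"
      by (rule mult_le_mono1) simp
    also note growth
    finally have "E \<le> P"
      by (simp only: mult_le_cancel1)
    then obtain D where D: "P = E + D"
      using le_Suc_ex by blast
    have "C * E \<le> (n + 2) * D"
      using growth unfolding D by (simp add: algebra_simps)
    then have "P * C \<le> (C + (n + 2)) * D"
      unfolding D by (simp add: algebra_simps)
    also have "\<dots> \<le> Q * D"
      using assms(3) unfolding B by (rule mult_le_mono1)
    finally show ?thesis
      unfolding D by (simp add: algebra_simps)
  qed
  have "Q * x0 \<le> P + Q"
    using assms(4) unfolding P_def by (cases x0) (simp_all add: algebra_simps)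
  then have "Q * x0 * C \<le> (P + Q) * C"
    by (rule mult_le_mono1)
  then have "Q * (x0 * C + 4 * n * (n + 2)) \<le> Q * P"
    using key unfolding E_def C_def by (simp add: algebra_simps)
  then show ?thesis
    using assms(2) unfolding P_def C_def by simp
qed

text \<open>The bound on x0 survives halving x0, and x0_weight_bound turns it into a lower bound on
  x1 and x2. The extra condition covers the root, the one level where x0_weight_bound does
  not apply.\<close>

definition invariant :: "nat \<Rightarrow> nat \<Rightarrow> state \<Rightarrow> bool" where
  "invariant q j x \<longleftrightarrow> (case x of (x0, x1, x2) \<Rightarrow>
     wt j x = 2 ^ j \<and> binom_le q 2 * (x0 - 1) < 2 ^ j \<and> x2_bound j \<le> x2 \<and> (j = q \<longrightarrow> q\<^sup>2 \<le> x2))"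

text \<open>The hypothesis q \<ge> 23 enters only through this bound (note 2^8 < 277).\<close>

lemma binom_le_2_ge_277: "23 \<le> q \<Longrightarrow> 277 \<le> binom_le q 2"
  using binom_le_mono[of 23 q 2] by (simp add: binom_le_2 choose_two)

lemma splittable_of_invariant:
  assumes "23 \<le> q" "Suc n \<le> q" "invariant q (Suc n) (x0, x1, x2)"
  shows "splittable n (x2_bound n) (x0, x1, x2)"
proof -
  have w: "wt (Suc n) (x0, x1, x2) = 2 ^ Suc n"
    and small: "binom_le q 2 * (x0 - 1) < 2 ^ Suc n"
    and x2: "x2_bound (Suc n) \<le> x2" and at_root: "Suc n = q \<Longrightarrow> q\<^sup>2 \<le> x2"
    using assms(3) unfolding invariant_def by auto
  have Q: "277 \<le> binom_le q 2"
    using assms(1) by (rule binom_le_2_ge_277)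
  consider (low) "n \<le> 7" | (root) "8 \<le> n" "Suc n = q" | (mid) "8 \<le> n" "Suc n < q"
    using assms(2) by linarith
  then show ?thesis
  proof cases
    case low
    then show ?thesis
      using splittable_low_level Q small w x2 by blast
  next
    case root
    then have "splittable n n (x0, x1, x2)"
      using at_root by (intro splittable_root_level) simp_all
    then show ?thesis
      using root(1) by (simp add: x2_bound_def)
  next
    case mid
    have "binom_le (n + 2) 2 \<le> binom_le q 2"
      using mid(2) by (intro binom_le_mono) simp
    with mid(1) Q small have "x0 * binom_le (n + 1) 2 + 4 * n * (n + 2) \<le> 2 ^ (n + 1)"
      by (intro x0_weight_bound) simp_all
    also have "\<dots> = x0 * binom_le (n + 1) 2 + x1 * (n + 2) + x2"
      using w unfolding wt_def binom_le_1 by simp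
    finally have "splittable n n (x0, x1, x2)"
      using mid(1) x2 by (intro splittable_mid_level) (simp_all add: x2_bound_def)
    then show ?thesis
      using mid(1) by (simp add: x2_bound_def)
  qed
qed

lemma invariant_step:
  assumes "23 \<le> q" "n < q" "invariant q (Suc n) x"
  shows "\<exists>a. legal x a \<and> (\<forall>b. invariant q n (next_state x a b))"
proof -
  obtain x0 x1 x2 where x: "x = (x0, x1, x2)"
    by (cases x)
  have w: "wt (Suc n) x = 2 ^ Suc n" and small: "binom_le q 2 * (x0 - 1) < 2 ^ Suc n"
    using assms(3) unfolding invariant_def x by auto
  have "even (2 * (x0 * (n + 1) + x1) + excess n x)"
    using w unfolding x wt_Suc by simp
  then have "even (excess n x)"
    by simp
  moreover have "splittable n (x2_bound n) x"
    using splittable_of_invariant assms unfolding x by simp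
  ultimately obtain a where a: "good_question n (x2_bound n) x a"
    using good_question_if_splittable by blast
  have "invariant q n (next_state x a b)" for b
  proof -
    obtain y0 y1 y2 where y: "next_state x a b = (y0, y1, y2)"
      by (cases "next_state x a b")
    have half: "2 * y0 \<le> x0 + 1" and y2: "x2_bound n \<le> y2"
      using a y unfolding good_question_def x by (auto split: prod.splits dest: spec[of _ b])
    have wt_y: "2 * wt n (y0, y1, y2) = 2 * 2 ^ n"
      using wt_next_state_half[of x a n b] a w unfolding good_question_def y by simp
    have "2 * (y0 - 1) \<le> x0 - 1"
      using half by simp
    then have "binom_le q 2 * (2 * (y0 - 1)) \<le> binom_le q 2 * (x0 - 1)"
      by (rule mult_le_mono2)
    with small have y0: "binom_le q 2 * (y0 - 1) < 2 ^ n"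
      by (simp only: power_Suc mult.left_commute[of _ 2])
    show ?thesis
      using wt_y y0 y2 assms(2) unfolding invariant_def y by simp
  qed
  then show ?thesis
    using a unfolding good_question_def by blast
qed

lemma invariant_start:
  assumes "23 \<le> q" "wt q (x0, x1, x2) = 2 ^ q" "q\<^sup>2 \<le> x2"
  shows "invariant q q (x0, x1, x2)"
proof -
  have "binom_le q 2 * (x0 - 1) + binom_le q 2 \<le> 2 ^ q" if "x0 \<ge> 1"
    using assms(2) that unfolding wt_def by (cases x0) (simp_all add: algebra_simps)
  moreover have "0 < binom_le q 2"
    using binom_le_2_ge_277[OF assms(1)] by simp
  ultimately have "binom_le q 2 * (x0 - 1) < 2 ^ q"
    by (cases "x0 \<ge> 1") simp_all
  moreover have "x2_bound q \<le> x2"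
    using assms(1,3) by (simp add: x2_bound_def power2_eq_square) (metis le_square order_trans)
  ultimately show ?thesis
    using assms(2,3) unfolding invariant_def by simp
qed

theorem lemma16:
  fixes q x0 x1 x2 :: nat
  assumes "q \<ge> 23"
    and "wt q (x0, x1, x2) = 2 ^ q"
    and "x2 \<ge> q ^ 2"
  shows "\<exists>s :: bool list \<Rightarrow> question.
     (\<forall>h. length h < q \<longrightarrow> legal (run s (x0, x1, x2) [] h) (s h)) \<and>
     (\<forall>h. length h = q \<longrightarrow> wt 0 (run s (x0, x1, x2) [] h) = 1) \<and>
     (\<forall>h. length h \<le> q \<longrightarrow>
        wt (q - length h) (run s (x0, x1, x2) [] h) = 2 ^ (q - length h))"
proof -
  obtain s where s: "\<And>h. length h \<le> q \<Longrightarrow> invariant q (q - length h) (run s (x0, x1, x2) [] h) \<and>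
      (length h < q \<longrightarrow> legal (run s (x0, x1, x2) [] h) (s h))"
    using strategy_from_invariant[where P = "invariant q"] invariant_step[OF assms(1)]
      invariant_start[OF assms] by blast
  have "wt (q - length h) (run s (x0, x1, x2) [] h) = 2 ^ (q - length h)" if "length h \<le> q" for h
    using s[OF that] unfolding invariant_def by (simp split: prod.splits)
  then show ?thesis
    using s by (metis diff_self_eq_0 le_refl less_imp_le_nat power_0)
qed

end
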